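(* Let $(\mathcal{V},\mathcal{I})$ be a finite connected graph with vertex set $\mathcal{V}$ and set of unoriented edges $\mathcal{I}$ (each pair of vertices joined by at most one edge), with $N$ edges, each edge $(i,j)\in\mathcal{I}$ having a length $L_{ij}>0$. Let $(S_i)_{i\in\mathcal{V}}$ be given with $\sum_{i\in\mathcal{V}} S_i=0$. Let $0<\gamma<1$ and $f_\gamma(s):=(\gamma+1)|s|^{\frac{2\gamma}{\gamma+1}}$. For fluxes $Q=(Q_{ij})$, with the convention $Q_{ij}=-Q_{ji}$, define $$F[Q]=\sum_{(i,j)\in\mathcal{I},\, i<j} f_\gamma(Q_{ij})\,L_{ij}.$$ Let $Q\in\mathbb{R}^N$ be a global minimizer of $F$ subject to the local mass conservation constraint $$\sum_{j\in N(i)} Q_{ij}=S_i\quad\text{for all } i\in\mathcal{V},$$ where $N(i)$ is the set of neighbours of $i$. Then $Q$ contains no loops, i.e., there exists no closed circle of edges $\{(i_1,i_2),(i_2,i_3),\dots,(i_K,i_1)\}\subset\mathcal{I}$ such that the fluxes $Q_{i_1i_2},Q_{i_2i_3},\dots,Q_{i_Ki_1}$ are all nonzero.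
   Context: Vertices are indexed by integers; the sum over $i<j$ counts each unoriented edge once. $Q_{ij}>0$ means net flow from vertex $i$ to vertex $j$. $F[Q]$ equals $\inf_{C\in\mathbb{R}^N_+}\sum_{i<j}\big(Q_{ij}^2/C_{ij}+\frac{1}{\gamma}C_{ij}^\gamma\big)L_{ij}$ (metabolic coefficient $\nu=1$). *)

theory Defs
  imports Complex_Main
begin

definition simple_graph :: "nat set \<Rightarrow> (nat \<Rightarrow> nat \<Rightarrow> bool) \<Rightarrow> bool" where
  "simple_graph V E \<longleftrightarrow> finite V \<and> (\<forall>i j. E i j \<longrightarrow> i \<in> V \<and> j \<in> V)
     \<and> (\<forall>i j. E i j \<longrightarrow> E j i) \<and> (\<forall>i. \<not> E i i)"

definition graph_connected :: "nat set \<Rightarrow> (nat \<Rightarrow> nat \<Rightarrow> bool) \<Rightarrow> bool" where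
  "graph_connected V E \<longleftrightarrow> (\<forall>i\<in>V. \<forall>j\<in>V. E\<^sup>*\<^sup>* i j)"

definition neighbours :: "nat set \<Rightarrow> (nat \<Rightarrow> nat \<Rightarrow> bool) \<Rightarrow> nat \<Rightarrow> nat set" where
  "neighbours V E i = {j \<in> V. E i j}"

definition edges_lt :: "nat set \<Rightarrow> (nat \<Rightarrow> nat \<Rightarrow> bool) \<Rightarrow> (nat \<times> nat) set" where
  "edges_lt V E = {(i, j). i \<in> V \<and> j \<in> V \<and> E i j \<and> i < j}"

definition f_gamma :: "real \<Rightarrow> real \<Rightarrow> real" where
  "f_gamma \<gamma> s = (\<gamma> + 1) * \<bar>s\<bar> powr (2 * \<gamma> / (\<gamma> + 1))"

definition energy_F ::
  "nat set \<Rightarrow> (nat \<Rightarrow> nat \<Rightarrow> bool) \<Rightarrow> (nat \<Rightarrow> nat \<Rightarrow> real) \<Rightarrow> real \<Rightarrow> (nat \<Rightarrow> nat \<Rightarrow> real) \<Rightarrow> real" where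
  "energy_F V E L \<gamma> Q = (\<Sum>(i, j)\<in>edges_lt V E. f_gamma \<gamma> (Q i j) * L i j)"

text \<open>Admissible fluxes: a flux is a vector indexed by the edges (values off edges are zero),
  antisymmetric Q i j = - Q j i, satisfying local mass conservation.\<close>
definition admissible_flux ::
  "nat set \<Rightarrow> (nat \<Rightarrow> nat \<Rightarrow> bool) \<Rightarrow> (nat \<Rightarrow> real) \<Rightarrow> (nat \<Rightarrow> nat \<Rightarrow> real) \<Rightarrow> bool" where
  "admissible_flux V E S Q \<longleftrightarrow>
     (\<forall>i j. \<not> E i j \<longrightarrow> Q i j = 0) \<and>
     (\<forall>i j. Q i j = - Q j i) \<and>
     (\<forall>i\<in>V. (\<Sum>j\<in>neighbours V E i. Q i j) = S i)"

definition has_flux_loop :: "(nat \<Rightarrow> nat \<Rightarrow> bool) \<Rightarrow> (nat \<Rightarrow> nat \<Rightarrow> real) \<Rightarrow> bool" where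
  "has_flux_loop E Q \<longleftrightarrow> (\<exists>cs :: nat list. length cs \<ge> 3 \<and> distinct cs \<and>
     (\<forall>k < length cs. E (cs ! k) (cs ! ((k + 1) mod length cs))
        \<and> Q (cs ! k) (cs ! ((k + 1) mod length cs)) \<noteq> 0))"

end

theory Submission
  imports Defs
begin

text \<open>If a minimizer \<open>Q\<close> carried nonzero flux around a cycle, then pushing an extra flux \<open>\<plusminus>t\<close>
  around that cycle would preserve mass conservation. For \<open>0 < t\<close> below every \<open>\<bar>Q\<^sub>i\<^sub>j\<bar>\<close> on the
  cycle no flux changes sign, and \<open>s \<mapsto> \<bar>s\<bar> powr (2\<gamma>/(\<gamma>+1))\<close> is strictly concave on each
  half-line, so \<open>F[Q + tC] + F[Q - tC] < 2 F[Q]\<close>: one of the two perturbations beats \<open>Q\<close>.\<close>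

lemma powr_midpoint_strict_concave:
  fixes p x t :: real
  assumes "0 < p" "p < 1" "0 < t" "t < x"
  shows "(x + t) powr p + (x - t) powr p < 2 * x powr p"
proof -
  define h where "h s = (x + s) powr p + (x - s) powr p" for s
  have deriv: "\<And>s. 0 \<le> s \<Longrightarrow> s \<le> t \<Longrightarrow>
      DERIV h s :> p * (x + s) powr (p - 1) - p * (x - s) powr (p - 1)"
    using assms unfolding h_def by (auto intro!: derivative_eq_intros)
  obtain z where z: "0 < z" "z < t"
    and mvt: "h t - h 0 = (t - 0) * (p * (x + z) powr (p - 1) - p * (x - z) powr (p - 1))"
    using MVT2[OF \<open>0 < t\<close> deriv] by auto
  have "(x + z) powr (p - 1) < (x - z) powr (p - 1)"
    using z assms by (intro powr_less_mono2_neg) auto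
  then have "t * (p * (x + z) powr (p - 1) - p * (x - z) powr (p - 1)) < 0"
    using assms by (intro mult_pos_neg) auto
  then have "h t < h 0" using mvt by simp
  then show ?thesis unfolding h_def by simp
qed

lemma f_gamma_midpoint_strict:
  assumes "0 < \<gamma>" "\<gamma> < 1" "s \<noteq> 0" "\<bar>s\<bar> < \<bar>a\<bar>"
  shows "f_gamma \<gamma> (a + s) + f_gamma \<gamma> (a - s) < 2 * f_gamma \<gamma> a"
proof -
  define p where "p = 2 * \<gamma> / (\<gamma> + 1)"
  have p: "0 < p" "p < 1" using assms(1,2) by (auto simp: p_def field_simps)
  have "(\<bar>a + s\<bar> = \<bar>a\<bar> + \<bar>s\<bar> \<and> \<bar>a - s\<bar> = \<bar>a\<bar> - \<bar>s\<bar>) \<or> (\<bar>a + s\<bar> = \<bar>a\<bar> - \<bar>s\<bar> \<and> \<bar>a - s\<bar> = \<bar>a\<bar> + \<bar>s\<bar>)"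
    using assms(4) by linarith
  then have "\<bar>a + s\<bar> powr p + \<bar>a - s\<bar> powr p = (\<bar>a\<bar> + \<bar>s\<bar>) powr p + (\<bar>a\<bar> - \<bar>s\<bar>) powr p"
    by auto
  also have "\<dots> < 2 * \<bar>a\<bar> powr p"
    using p assms(3,4) by (intro powr_midpoint_strict_concave) auto
  finally have "(\<gamma> + 1) * (\<bar>a + s\<bar> powr p + \<bar>a - s\<bar> powr p) < (\<gamma> + 1) * (2 * \<bar>a\<bar> powr p)"
    using assms(1) by (intro mult_strict_left_mono) auto
  then show ?thesis unfolding f_gamma_def p_def[symmetric] by (simp add: algebra_simps)
qed

lemma sum_f_gamma_perturb_strict:
  fixes a c w :: "'e \<Rightarrow> real"
  assumes "finite A" "0 < \<gamma>" "\<gamma> < 1"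
    and w: "\<And>e. e \<in> A \<Longrightarrow> 0 < w e"
    and supp: "\<And>e. e \<in> A \<Longrightarrow> c e \<noteq> 0 \<Longrightarrow> a e \<noteq> 0"
    and e0: "e0 \<in> A" "c e0 \<noteq> 0"
  shows "\<exists>t>0. (\<Sum>e\<in>A. f_gamma \<gamma> (a e + t * c e) * w e) + (\<Sum>e\<in>A. f_gamma \<gamma> (a e - t * c e) * w e)
      < 2 * (\<Sum>e\<in>A. f_gamma \<gamma> (a e) * w e)"
proof -
  define D where "D = {e \<in> A. c e \<noteq> 0}"
  define m where "m = Min ((\<lambda>e. \<bar>a e\<bar> / \<bar>c e\<bar>) ` D)"
  define t where "t = m / 2"
  have D: "finite D" "e0 \<in> D" using assms unfolding D_def by auto
  have "0 < m" unfolding m_def using D supp by (subst Min_gr_iff) (auto simp: D_def)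
  then have "t > 0" by (simp add: t_def)
  have small: "\<bar>t * c e\<bar> < \<bar>a e\<bar>" if "e \<in> D" for e
  proof -
    have "m \<le> \<bar>a e\<bar> / \<bar>c e\<bar>" unfolding m_def using D(1) that by (intro Min_le) auto
    then have "t < \<bar>a e\<bar> / \<bar>c e\<bar>" using \<open>0 < m\<close> unfolding t_def by linarith
    then show ?thesis using that \<open>t > 0\<close> by (simp add: D_def abs_mult pos_less_divide_eq)
  qed
  define g where "g e = f_gamma \<gamma> (a e + t * c e) * w e + f_gamma \<gamma> (a e - t * c e) * w e" for e
  have strict: "g e < 2 * (f_gamma \<gamma> (a e) * w e)" if "e \<in> D" for e
  proof -
    have "(f_gamma \<gamma> (a e + t * c e) + f_gamma \<gamma> (a e - t * c e)) * w e < (2 * f_gamma \<gamma> (a e)) * w e"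
      using that \<open>t > 0\<close> w small[OF that] assms(2,3)
      by (intro mult_strict_right_mono f_gamma_midpoint_strict) (auto simp: D_def)
    then show ?thesis by (simp add: g_def algebra_simps)
  qed
  have "g e \<le> 2 * (f_gamma \<gamma> (a e) * w e)" if "e \<in> A" for e
    using strict[of e] that by (cases "c e = 0") (auto simp: g_def D_def)
  then have "sum g A < (\<Sum>e\<in>A. 2 * (f_gamma \<gamma> (a e) * w e))"
    using strict[OF D(2)] \<open>finite A\<close> e0 by (intro sum_strict_mono_ex1) auto
  then show ?thesis using \<open>t > 0\<close> by (auto simp: g_def sum.distrib sum_distrib_left)
qed

lemma admissible_flux_add_scaled:
  assumes "admissible_flux V E S Q" "admissible_flux V E S' C"
  shows "admissible_flux V E (\<lambda>i. S i + t * S' i) (\<lambda>i j. Q i j + t * C i j)"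
proof -
  have Q: "\<And>i j. \<not> E i j \<Longrightarrow> Q i j = 0" "\<And>i j. Q i j = - Q j i"
    "\<And>i. i \<in> V \<Longrightarrow> (\<Sum>j\<in>neighbours V E i. Q i j) = S i"
    using assms(1) unfolding admissible_flux_def by blast+
  have C: "\<And>i j. \<not> E i j \<Longrightarrow> C i j = 0" "\<And>i j. C i j = - C j i"
    "\<And>i. i \<in> V \<Longrightarrow> (\<Sum>j\<in>neighbours V E i. C i j) = S' i"
    using assms(2) unfolding admissible_flux_def by blast+
  show ?thesis
    unfolding admissible_flux_def
  proof (intro conjI allI impI ballI)
    fix i j
    show "Q i j + t * C i j = - (Q j i + t * C j i)" using Q(2)[of i j] C(2)[of i j] by simp
    assume "\<not> E i j"
    then show "Q i j + t * C i j = 0" by (simp add: Q(1) C(1))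
  next
    fix i assume "i \<in> V"
    then show "(\<Sum>j\<in>neighbours V E i. Q i j + t * C i j) = S i + t * S' i"
      by (simp add: Q(3) C(3) sum.distrib sum_distrib_left[symmetric])
  qed
qed

lemma circulation_supported_by_minimizer_vanishes:
  assumes graph: "simple_graph V E"
    and Lpos: "\<And>i j. E i j \<Longrightarrow> L i j > 0"
    and gam: "0 < \<gamma>" "\<gamma> < 1"
    and adm: "admissible_flux V E S Q"
    and minim: "\<And>Q'. admissible_flux V E S Q' \<Longrightarrow> energy_F V E L \<gamma> Q \<le> energy_F V E L \<gamma> Q'"
    and circ: "admissible_flux V E (\<lambda>_. 0) C"
    and supp: "\<And>i j. C i j \<noteq> 0 \<Longrightarrow> Q i j \<noteq> 0"
  shows "C i j = 0"
proof (rule ccontr)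
  assume "C i j \<noteq> 0"
  have C_off: "\<And>i j. \<not> E i j \<Longrightarrow> C i j = 0" and C_anti: "\<And>i j. C i j = - C j i"
    using circ unfolding admissible_flux_def by blast+
  have edge: "E i j" using C_off \<open>C i j \<noteq> 0\<close> by blast
  then have "i \<noteq> j" "i \<in> V" "j \<in> V" "E j i"
    using graph unfolding simple_graph_def by auto
  then have "(i, j) \<in> edges_lt V E \<or> (j, i) \<in> edges_lt V E"
    using edge by (auto simp: edges_lt_def dest: linorder_neqE)
  then obtain e0 where e0: "e0 \<in> edges_lt V E" "C (fst e0) (snd e0) \<noteq> 0"
    using \<open>C i j \<noteq> 0\<close> C_anti[of j i] by fastforce
  have "finite V" using graph unfolding simple_graph_def by blast
  then have fin: "finite (edges_lt V E)"
    by (rule finite_subset[rotated, OF finite_cartesian_product[OF _ \<open>finite V\<close>]]) (auto simp: edges_lt_def)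
  have energy: "energy_F V E L \<gamma> Q' =
      (\<Sum>e\<in>edges_lt V E. f_gamma \<gamma> (Q' (fst e) (snd e)) * L (fst e) (snd e))" for Q'
    unfolding energy_F_def by (simp add: split_def)
  have weights: "\<And>e. e \<in> edges_lt V E \<Longrightarrow> 0 < L (fst e) (snd e)"
    using Lpos by (auto simp: edges_lt_def)
  have support: "\<And>e. e \<in> edges_lt V E \<Longrightarrow> C (fst e) (snd e) \<noteq> 0 \<Longrightarrow> Q (fst e) (snd e) \<noteq> 0"
    using supp by blast
  obtain t where gain:
    "energy_F V E L \<gamma> (\<lambda>i j. Q i j + t * C i j) + energy_F V E L \<gamma> (\<lambda>i j. Q i j - t * C i j)
       < 2 * energy_F V E L \<gamma> Q"
    using sum_f_gamma_perturb_strict[where a = "\<lambda>e. Q (fst e) (snd e)" and c = "\<lambda>e. C (fst e) (snd e)"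
        and w = "\<lambda>e. L (fst e) (snd e)", OF fin gam weights support e0]
    unfolding energy by blast
  have "energy_F V E L \<gamma> Q \<le> energy_F V E L \<gamma> (\<lambda>i j. Q i j + s * C i j)" for s
    using minim admissible_flux_add_scaled[OF adm circ, of s] by simp
  from this[of t] this[of "- t"] gain show False by simp
qed

text \<open>Net number of traversals of the arc \<open>i \<rightarrow> j\<close> by the closed walk \<open>cs\<close>, whose
  arcs are \<open>cs ! k \<rightarrow> rotate1 cs ! k\<close>.\<close>
definition cycle_flow :: "'a list \<Rightarrow> 'a \<Rightarrow> 'a \<Rightarrow> real" where
  "cycle_flow cs i j = (\<Sum>k<length cs.
     of_bool (cs ! k = i \<and> rotate1 cs ! k = j) - of_bool (rotate1 cs ! k = i \<and> cs ! k = j))"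

lemma cycle_flow_antisym: "cycle_flow cs i j = - cycle_flow cs j i"
  unfolding cycle_flow_def by (simp add: sum_negf[symmetric] conj_commute)

lemma cycle_flow_nonzero_imp_arc:
  assumes "cycle_flow cs i j \<noteq> 0"
  obtains k where "k < length cs"
    "(cs ! k = i \<and> rotate1 cs ! k = j) \<or> (rotate1 cs ! k = i \<and> cs ! k = j)"
  using assms unfolding cycle_flow_def by (fastforce intro: sum.neutral)

lemma sum_nth_rotate1:
  "(\<Sum>k<length xs. f (rotate1 xs ! k)) = (\<Sum>k<length xs. f (xs ! k) :: 'b :: comm_monoid_add)"
proof -
  have "sum_list (map f (rotate1 xs)) = sum_list (map f xs)"
    by (cases xs) (simp_all add: add.commute)
  then show ?thesis by (simp add: sum_list_sum_nth atLeast0LessThan)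
qed

lemma cycle_flow_divergence_free:
  assumes "finite N"
    and out: "\<And>k. k < length cs \<Longrightarrow> cs ! k = i \<Longrightarrow> rotate1 cs ! k \<in> N"
    and inc: "\<And>k. k < length cs \<Longrightarrow> rotate1 cs ! k = i \<Longrightarrow> cs ! k \<in> N"
  shows "(\<Sum>j\<in>N. cycle_flow cs i j) = 0"
proof -
  have delta: "(\<Sum>j\<in>N. of_bool (P \<and> x = j)) = (of_bool P :: real)" if "P \<Longrightarrow> x \<in> N" for P x
    using that \<open>finite N\<close> by (cases P) (simp_all add: of_bool_def sum.delta')
  have "(\<Sum>j\<in>N. cycle_flow cs i j) = (\<Sum>k<length cs. \<Sum>j\<in>N.
      of_bool (cs ! k = i \<and> rotate1 cs ! k = j) - of_bool (rotate1 cs ! k = i \<and> cs ! k = j))"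
    unfolding cycle_flow_def by (rule sum.swap)
  also have "\<dots> = (\<Sum>k<length cs. of_bool (cs ! k = i) - of_bool (rotate1 cs ! k = i))"
    using out inc by (intro sum.cong) (simp_all add: sum_subtractf delta)
  also have "\<dots> = 0"
    by (simp only: sum_subtractf sum_nth_rotate1[where f = "\<lambda>x. of_bool (x = i)"])
  finally show ?thesis .
qed

lemma cycle_flow_admissible:
  assumes graph: "simple_graph V E"
    and walk: "\<And>k. k < length cs \<Longrightarrow> E (cs ! k) (rotate1 cs ! k)"
  shows "admissible_flux V E (\<lambda>_. 0) (cycle_flow cs)"
  unfolding admissible_flux_def
proof (intro conjI allI impI ballI)
  fix i j assume "\<not> E i j"
  show "cycle_flow cs i j = 0"
  proof (rule ccontr)
    assume "cycle_flow cs i j \<noteq> 0"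
    then obtain k where "k < length cs"
      "(cs ! k = i \<and> rotate1 cs ! k = j) \<or> (rotate1 cs ! k = i \<and> cs ! k = j)"
      by (rule cycle_flow_nonzero_imp_arc)
    then have "E i j" using walk graph unfolding simple_graph_def by blast
    with \<open>\<not> E i j\<close> show False ..
  qed
next
  fix i j show "cycle_flow cs i j = - cycle_flow cs j i" by (rule cycle_flow_antisym)
next
  fix i assume "i \<in> V"
  show "(\<Sum>j\<in>neighbours V E i. cycle_flow cs i j) = 0"
  proof (rule cycle_flow_divergence_free)
    show "finite (neighbours V E i)" using graph unfolding neighbours_def simple_graph_def by simp
    show "rotate1 cs ! k \<in> neighbours V E i" if "k < length cs" "cs ! k = i" for k
      using walk[OF that(1)] that(2) graph unfolding neighbours_def simple_graph_def by blast
    show "cs ! k \<in> neighbours V E i" if "k < length cs" "rotate1 cs ! k = i" for k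
      using walk[OF that(1)] that(2) graph unfolding neighbours_def simple_graph_def by blast
  qed
qed

lemma cycle_flow_first_arc:
  assumes "distinct cs" "length cs \<ge> 3"
  shows "cycle_flow cs (cs ! 0) (cs ! 1) = 1"
proof -
  have "cs \<noteq> []" using assms(2) by auto
  have fwd: "(cs ! k = cs ! 0 \<and> rotate1 cs ! k = cs ! 1) \<longleftrightarrow> k = 0" if "k < length cs" for k
    using assms that \<open>cs \<noteq> []\<close> nth_eq_iff_index_eq[OF assms(1) that, of 0]
    by (auto simp: nth_rotate1)
  have bwd: "\<not> (rotate1 cs ! k = cs ! 0 \<and> cs ! k = cs ! 1)" if "k < length cs" for k
    using assms that \<open>cs \<noteq> []\<close> nth_eq_iff_index_eq[OF assms(1) that, of 1]
      nth_eq_iff_index_eq[OF assms(1), of "Suc (Suc 0)" 0]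
    by (auto simp: nth_rotate1)
  have "cycle_flow cs (cs ! 0) (cs ! 1) = (\<Sum>k<length cs. of_bool (k = 0))"
    unfolding cycle_flow_def using fwd bwd by (intro sum.cong) auto
  also have "\<dots> = 1" using \<open>cs \<noteq> []\<close> by (simp add: of_bool_def)
  finally show ?thesis .
qed

theorem lemma2p1:
  fixes V :: "nat set" and E :: "nat \<Rightarrow> nat \<Rightarrow> bool"
    and L :: "nat \<Rightarrow> nat \<Rightarrow> real" and S :: "nat \<Rightarrow> real"
    and \<gamma> :: real and Q :: "nat \<Rightarrow> nat \<Rightarrow> real"
  assumes graph: "simple_graph V E"
    and conn: "graph_connected V E"
    and Lpos: "\<And>i j. E i j \<Longrightarrow> L i j > 0"
    and Lsym: "\<And>i j. E i j \<Longrightarrow> L i j = L j i"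
    and Ssum: "(\<Sum>i\<in>V. S i) = 0"
    and gam: "0 < \<gamma>" "\<gamma> < 1"
    and adm: "admissible_flux V E S Q"
    and minim: "\<And>Q'. admissible_flux V E S Q' \<Longrightarrow> energy_F V E L \<gamma> Q \<le> energy_F V E L \<gamma> Q'"
  shows "\<not> has_flux_loop E Q"
proof
  assume "has_flux_loop E Q"
  then obtain cs where len: "length cs \<ge> 3" and dist: "distinct cs"
    and arcs: "\<And>k. k < length cs \<Longrightarrow> E (cs ! k) (rotate1 cs ! k) \<and> Q (cs ! k) (rotate1 cs ! k) \<noteq> 0"
    unfolding has_flux_loop_def by (auto simp: nth_rotate1)
  have circ: "admissible_flux V E (\<lambda>_. 0) (cycle_flow cs)"
    using graph arcs by (intro cycle_flow_admissible) auto
  have Q_anti: "Q i j = - Q j i" for i j using adm unfolding admissible_flux_def by blast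
  have "Q i j \<noteq> 0" if flow: "cycle_flow cs i j \<noteq> 0" for i j
  proof -
    obtain k where "k < length cs"
      "(cs ! k = i \<and> rotate1 cs ! k = j) \<or> (rotate1 cs ! k = i \<and> cs ! k = j)"
      using flow by (rule cycle_flow_nonzero_imp_arc)
    then show ?thesis using arcs Q_anti[of i j] by auto
  qed
  then have "cycle_flow cs (cs ! 0) (cs ! 1) = 0"
    using circulation_supported_by_minimizer_vanishes[OF graph Lpos gam adm minim circ] by blast
  with cycle_flow_first_arc[OF dist len] show False by simp
qed

end
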